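(* Consider the following RSS-based localization setting. A stationary target is at an unknown position $\mathbf{s}=(x,y,0)\in\mathbb{R}^3$. There are $N$ UAVs; UAV $i$ ($1\le i\le N$) takes $M_i\ge 1$ measurements, the $j$-th one at position $\mathbf{u}_{i,j}=(x_{i,j},y_{i,j},h_{i,j})$. Let $r_{i,j}=\sqrt{(x-x_{i,j})^2+(y-y_{i,j})^2}$ (horizontal distance), $d_{i,j}=\sqrt{r_{i,j}^2+h_{i,j}^2}$, and let $\beta_{i,j}$ be the horizontal UAV–target angle, i.e. $(x_{i,j}-x,\,y_{i,j}-y)=r_{i,j}(\cos\beta_{i,j},\sin\beta_{i,j})$, with $\mathbf{g}_{i,j}=(\cos\beta_{i,j},\sin\beta_{i,j})^T$. The $j$-th measurement of UAV $i$ is $R_{i,j}=p_0-10\gamma\log_{10}(d_{i,j})+\eta_{i,j}$ with known $p_0$, $\gamma>0$ and independent noises $\eta_{i,j}\sim\mathcal{N}(0,\sigma_i^2)$, $\sigma_i>0$. The Fisher information matrix for $(x,y)$ is $$\mathbf{F}=\Big(\frac{10\gamma}{\ln 10}\Big)^2\sum_{i=1}^N\sum_{j=1}^{M_i}\sigma_i^{-2}\frac{r_{i,j}^2}{d_{i,j}^4}\mathbf{g}_{i,j}\mathbf{g}_{i,j}^T.$$ A configuration (choice of all $\mathbf{u}_{i,j}$) is feasible if $r_{i,j}\ge r_0$, $h_{i,j}\ge h_0$ for all $i,j$, and $\|\mathbf{u}_{i,j}-\mathbf{u}_{i,j-1}\|\le t_0c_{\max}$ for $2\le j\le M_i$, where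 $r_0,h_0,t_0>0$ and $c_{\max}\ge 0$ are given. Problem P is to maximize $\det\mathbf{F}$ over feasible configurations. Assume the UAVs hover, i.e. $c_{\max}=0$, so $\mathbf{u}_{i,j}=\mathbf{u}_i$ (and $r_{i,j}=r_i$, $h_{i,j}=h_i$, $d_{i,j}=d_i$, $\mathbf{g}_{i,j}=\mathbf{g}_i$) for all $j$. Let $t$ be an index with $M_t\sigma_t^{-2}=\max\{M_i\sigma_i^{-2}:1\le i\le N\}$, and let $r^*=\max\{r_0,h_0\}$. If $M_t\sigma_t^{-2}\le\frac12\sum_{i=1}^N M_i\sigma_i^{-2}$, then any configuration satisfying $r_i=r^*$ and $h_i=h_0$ for all $i=1,\dots,N$, together with $$\sum_{i=1}^N M_i\sigma_i^{-2}\frac{r_i^2}{d_i^4}\mathbf{g}_i\mathbf{g}_i^T=\frac12\Big(\sum_{i=1}^N M_i\sigma_i^{-2}\frac{r_i^2}{d_i^4}\Big)\mathbf{I},$$ is an optimal solution of problem P.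
   Context: $\mathbf{I}$ is the $2\times 2$ identity matrix. All UAV positions are known to the UAVs; the optimization is over UAV positions for a given target position $\mathbf{s}$. *)

theory Defs
  imports "HOL-Analysis.Analysis"
begin

text \<open>A UAV position is a triple (x, y, h); the target is s = (x, y, 0), represented by (x, y).
  A configuration is u :: nat => nat => position, u i j = position of UAV i at its j-th
  measurement, for 1 <= i <= N and 1 <= j <= M i.\<close>

type_synonym pos3 = "real \<times> real \<times> real"

definition hdist :: "real \<times> real \<Rightarrow> pos3 \<Rightarrow> real" where
  "hdist s p = sqrt ((fst s - fst p)\<^sup>2 + (snd s - fst (snd p))\<^sup>2)"

definition height :: "pos3 \<Rightarrow> real" where
  "height p = snd (snd p)"

definition dist3 :: "real \<times> real \<Rightarrow> pos3 \<Rightarrow> real" where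
  "dist3 s p = sqrt ((hdist s p)\<^sup>2 + (height p)\<^sup>2)"

definition gvec :: "real \<times> real \<Rightarrow> pos3 \<Rightarrow> real^2" where
  "gvec s p = (\<chi> k. if k = 1 then (fst p - fst s) / hdist s p
                    else (fst (snd p) - snd s) / hdist s p)"

definition outer :: "real^2 \<Rightarrow> real^2^2" where
  "outer g = (\<chi> a b. g $ a * g $ b)"

definition fisher ::
  "real \<Rightarrow> (nat \<Rightarrow> real) \<Rightarrow> nat \<Rightarrow> (nat \<Rightarrow> nat) \<Rightarrow> real \<times> real \<Rightarrow> (nat \<Rightarrow> nat \<Rightarrow> pos3) \<Rightarrow> real^2^2"
  where
  "fisher \<gamma> \<sigma> N M s u =
     ((10 * \<gamma> / ln 10)\<^sup>2) *\<^sub>R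
       (\<Sum>i\<in>{1..N}. \<Sum>j\<in>{1..M i}.
          (inverse ((\<sigma> i)\<^sup>2) * (hdist s (u i j))\<^sup>2 / (dist3 s (u i j)) ^ 4) *\<^sub>R outer (gvec s (u i j)))"

definition pdist3 :: "pos3 \<Rightarrow> pos3 \<Rightarrow> real" where
  "pdist3 p q = sqrt ((fst p - fst q)\<^sup>2 + (fst (snd p) - fst (snd q))\<^sup>2 + (snd (snd p) - snd (snd q))\<^sup>2)"

definition feasible ::
  "real \<Rightarrow> real \<Rightarrow> real \<Rightarrow> real \<Rightarrow> nat \<Rightarrow> (nat \<Rightarrow> nat) \<Rightarrow> real \<times> real \<Rightarrow> (nat \<Rightarrow> nat \<Rightarrow> pos3) \<Rightarrow> bool"
  where
  "feasible r0 h0 t0 cmax N M s u \<longleftrightarrow>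
     (\<forall>i\<in>{1..N}. \<forall>j\<in>{1..M i}. hdist s (u i j) \<ge> r0 \<and> height (u i j) \<ge> h0) \<and>
     (\<forall>i\<in>{1..N}. \<forall>j\<in>{2..M i}. pdist3 (u i j) (u i (j - 1)) \<le> t0 * cmax)"

end

theory Submission
  imports Defs
begin

text \<open>For a symmetric 2 \<times> 2 matrix, det F \<le> (trace F / 2)^2 with equality iff F is a multiple
  of the identity. Since every g is a unit vector, the trace of the Fisher matrix is the weighted
  sum of the gains r^2/d^4 of the single measurements, and each gain is maximal for r = max r0 h0
  and h = h0 (the function x \<mapsto> x/(x + h0^2)^2 peaks at x = h0^2). Hence the hovering configuration
  of the theorem, whose Fisher matrix is isotropic and whose gains are all maximal, attains the
  bound.\<close>

lemma det2_le_half_trace_squared: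
  fixes A :: "real^2^2"
  assumes "A$1$2 = A$2$1"
  shows "det A \<le> (trace A / 2)\<^sup>2"
proof -
  have "(trace A / 2)\<^sup>2 - det A = ((A$1$1 - A$2$2) / 2)\<^sup>2 + (A$1$2)\<^sup>2"
    using assms by (simp add: trace_def sum_2 det_2 power2_eq_square field_simps)
  then show ?thesis
    by (metis add_nonneg_nonneg diff_ge_0_iff_ge zero_le_power2)
qed

lemma trace_scaleR: "trace (c *\<^sub>R A) = c * trace (A :: real^'n^'n)"
  by (simp add: trace_def sum_distrib_left)

lemma trace_sum: "trace (\<Sum>x\<in>S. f x) = (\<Sum>x\<in>S. trace (f x :: real^'n^'n))"
  by (simp add: trace_def sum_component sum.swap[of _ UNIV])

definition rss_gain :: "real \<Rightarrow> real \<Rightarrow> real" where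
  "rss_gain r h = r\<^sup>2 / (r\<^sup>2 + h\<^sup>2)\<^sup>2"

lemma rss_gain_antimono_height:
  assumes "0 < h0" "h0 \<le> h"
  shows "rss_gain r h \<le> rss_gain r h0"
proof -
  have "h0\<^sup>2 \<le> h\<^sup>2" using assms by (intro power_mono) auto
  moreover have "0 < r\<^sup>2 + h0\<^sup>2" using assms(1) by (simp add: add_nonneg_pos)
  ultimately show ?thesis
    unfolding rss_gain_def by (intro divide_left_mono power_mono mult_pos_pos) auto
qed

lemma rss_gain_le_balanced:
  assumes "0 < h"
  shows "rss_gain r h \<le> rss_gain h h"
proof -
  have "r\<^sup>2 * (h\<^sup>2 + h\<^sup>2)\<^sup>2 \<le> h\<^sup>2 * (r\<^sup>2 + h\<^sup>2)\<^sup>2"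
    using mult_nonneg_nonneg[OF zero_le_power2[of h] zero_le_power2[of "r\<^sup>2 - h\<^sup>2"]]
    by (simp add: power2_eq_square algebra_simps)
  with assms show ?thesis
    by (simp add: rss_gain_def divide_simps add_pos_nonneg)
qed

lemma rss_gain_antimono_range:
  assumes "0 < h" "h \<le> R" "R \<le> r"
  shows "rss_gain r h \<le> rss_gain R h"
proof -
  have "h\<^sup>2 \<le> R\<^sup>2" "R\<^sup>2 \<le> r\<^sup>2" using assms by (auto intro: power_mono)
  then have "h\<^sup>2 * h\<^sup>2 \<le> r\<^sup>2 * R\<^sup>2"
    by (intro mult_mono) auto
  with \<open>R\<^sup>2 \<le> r\<^sup>2\<close> have "0 \<le> (r\<^sup>2 - R\<^sup>2) * (r\<^sup>2 * R\<^sup>2 - h\<^sup>2 * h\<^sup>2)"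
    by simp
  then have "r\<^sup>2 * (R\<^sup>2 + h\<^sup>2)\<^sup>2 \<le> R\<^sup>2 * (r\<^sup>2 + h\<^sup>2)\<^sup>2"
    by (simp add: power2_eq_square algebra_simps)
  with assms show ?thesis
    by (simp add: rss_gain_def divide_simps add_pos_nonneg)
qed

lemma rss_gain_le_max:
  assumes "0 < h0" "r0 \<le> r" "h0 \<le> h"
  shows "rss_gain r h \<le> rss_gain (max r0 h0) h0"
proof -
  have "rss_gain r h \<le> rss_gain r h0"
    using assms by (intro rss_gain_antimono_height)
  also have "\<dots> \<le> rss_gain (max r0 h0) h0"
  proof (cases "r0 \<le> h0")
    case True
    then show ?thesis using rss_gain_le_balanced[OF assms(1)] by simp
  next
    case False
    then show ?thesis using assms by (simp add: rss_gain_antimono_range)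
  qed
  finally show ?thesis .
qed

lemma dist3_pow4: "(dist3 s p)^4 = ((hdist s p)\<^sup>2 + (height p)\<^sup>2)\<^sup>2"
proof -
  have "(dist3 s p)\<^sup>2 = (hdist s p)\<^sup>2 + (height p)\<^sup>2"
    unfolding dist3_def by (simp add: add_nonneg_nonneg)
  moreover have "(dist3 s p)^4 = ((dist3 s p)\<^sup>2)\<^sup>2" by (simp flip: power_mult)
  ultimately show ?thesis by simp
qed

lemma hdist_over_dist3: "(hdist s p)\<^sup>2 / (dist3 s p)^4 = rss_gain (hdist s p) (height p)"
  by (simp add: dist3_pow4 rss_gain_def)

lemma trace_outer_gvec:
  assumes "hdist s p > 0"
  shows "trace (outer (gvec s p)) = 1"
proof -
  have "trace (outer (gvec s p)) = ((fst p - fst s)\<^sup>2 + (fst (snd p) - snd s)\<^sup>2) / (hdist s p)\<^sup>2"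
    by (simp add: trace_def sum_2 outer_def gvec_def power2_eq_square add_divide_distrib)
  also have "\<dots> = (hdist s p)\<^sup>2 / (hdist s p)\<^sup>2"
    unfolding hdist_def by (simp add: power2_commute)
  finally show ?thesis using assms by simp
qed

lemma fisher_symmetric: "fisher \<gamma> \<sigma> N M s v $ 1 $ 2 = fisher \<gamma> \<sigma> N M s v $ 2 $ 1"
  by (simp add: fisher_def outer_def sum_component mult.commute)

lemma trace_fisher:
  assumes "\<forall>i\<in>{1..N}. \<forall>j\<in>{1..M i}. hdist s (v i j) > 0"
  shows "trace (fisher \<gamma> \<sigma> N M s v) = (10 * \<gamma> / ln 10)\<^sup>2 *
           (\<Sum>i\<in>{1..N}. \<Sum>j\<in>{1..M i}. rss_gain (hdist s (v i j)) (height (v i j)) / (\<sigma> i)\<^sup>2)"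
  using assms unfolding fisher_def trace_scaleR trace_sum
  by (intro arg_cong[where f = "(*) _"] sum.cong refl)
     (simp add: trace_outer_gvec hdist_over_dist3[symmetric] field_simps)

lemma det_fisher_le:
  assumes "feasible r0 h0 t0 cmax N M s v" "0 < r0" "0 < h0"
  shows "det (fisher \<gamma> \<sigma> N M s v) \<le>
           ((10 * \<gamma> / ln 10)\<^sup>2 / 2 * (\<Sum>i\<in>{1..N}. real (M i) / (\<sigma> i)\<^sup>2 * rss_gain (max r0 h0) h0))\<^sup>2"
proof -
  let ?c = "(10 * \<gamma> / ln 10)\<^sup>2"
  let ?G = "\<Sum>i\<in>{1..N}. \<Sum>j\<in>{1..M i}. rss_gain (hdist s (v i j)) (height (v i j)) / (\<sigma> i)\<^sup>2"
  have bounds: "r0 \<le> hdist s (v i j)" "h0 \<le> height (v i j)"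
    if "i \<in> {1..N}" "j \<in> {1..M i}" for i j
    using assms(1) that unfolding feasible_def by auto
  have trace: "trace (fisher \<gamma> \<sigma> N M s v) = ?c * ?G"
    using bounds assms(2) by (intro trace_fisher) force
  have "0 \<le> ?G" by (intro sum_nonneg) (simp add: rss_gain_def)
  have "?G \<le> (\<Sum>i\<in>{1..N}. \<Sum>j\<in>{1..M i}. rss_gain (max r0 h0) h0 / (\<sigma> i)\<^sup>2)"
    using bounds assms(3)
    by (intro sum_mono divide_right_mono rss_gain_le_max) auto
  also have "\<dots> = (\<Sum>i\<in>{1..N}. real (M i) / (\<sigma> i)\<^sup>2 * rss_gain (max r0 h0) h0)"
    by simp
  finally have "?c / 2 * ?G \<le> ?c / 2 * (\<Sum>i\<in>{1..N}. real (M i) / (\<sigma> i)\<^sup>2 * rss_gain (max r0 h0) h0)"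
    by (intro mult_left_mono) auto
  with \<open>0 \<le> ?G\<close> have "(trace (fisher \<gamma> \<sigma> N M s v) / 2)\<^sup>2 \<le>
      (?c / 2 * (\<Sum>i\<in>{1..N}. real (M i) / (\<sigma> i)\<^sup>2 * rss_gain (max r0 h0) h0))\<^sup>2"
    unfolding trace by (intro power_mono) auto
  with det2_le_half_trace_squared[OF fisher_symmetric, of \<gamma> \<sigma> N M s v] show ?thesis
    by linarith
qed

lemma fisher_hover:
  assumes "\<forall>i\<in>{1..N}. \<forall>j\<in>{1..M i}. u i j = w i"
  shows "fisher \<gamma> \<sigma> N M s u = (10 * \<gamma> / ln 10)\<^sup>2 *\<^sub>R
           (\<Sum>i\<in>{1..N}. (real (M i) / (\<sigma> i)\<^sup>2 * (hdist s (w i))\<^sup>2 / (dist3 s (w i)) ^ 4)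
                          *\<^sub>R outer (gvec s (w i)))"
  unfolding fisher_def
proof (intro arg_cong[where f = "(*\<^sub>R) _"] sum.cong refl)
  fix i assume "i \<in> {1..N}"
  with assms have "(\<Sum>j\<in>{1..M i}. (inverse ((\<sigma> i)\<^sup>2) * (hdist s (u i j))\<^sup>2 / (dist3 s (u i j)) ^ 4)
                        *\<^sub>R outer (gvec s (u i j)))
      = (\<Sum>j\<in>{1..M i}. (inverse ((\<sigma> i)\<^sup>2) * (hdist s (w i))\<^sup>2 / (dist3 s (w i)) ^ 4)
                        *\<^sub>R outer (gvec s (w i)))"
    by (intro sum.cong) auto
  also have "\<dots> = real (M i) *\<^sub>R ((inverse ((\<sigma> i)\<^sup>2) * (hdist s (w i))\<^sup>2 / (dist3 s (w i)) ^ 4)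
                        *\<^sub>R outer (gvec s (w i)))"
    by (subst sum_constant_scaleR) simp
  finally show "(\<Sum>j\<in>{1..M i}. (inverse ((\<sigma> i)\<^sup>2) * (hdist s (u i j))\<^sup>2 / (dist3 s (u i j)) ^ 4)
                        *\<^sub>R outer (gvec s (u i j)))
      = (real (M i) / (\<sigma> i)\<^sup>2 * (hdist s (w i))\<^sup>2 / (dist3 s (w i)) ^ 4) *\<^sub>R outer (gvec s (w i))"
    by (simp add: divide_inverse mult.assoc)
qed

lemma feasible_hover:
  assumes "\<forall>i\<in>{1..N}. \<forall>j\<in>{1..M i}. u i j = w i"
    and "\<forall>i\<in>{1..N}. r0 \<le> hdist s (w i) \<and> h0 \<le> height (w i)"
    and "0 \<le> t0" "0 \<le> cmax"
  shows "feasible r0 h0 t0 cmax N M s u"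
  unfolding feasible_def
proof (intro conjI ballI)
  fix i j assume "i \<in> {1..N}" "j \<in> {2..M i}"
  then have "j \<in> {1..M i}" "j - 1 \<in> {1..M i}" by auto
  with assms(1) \<open>i \<in> {1..N}\<close> have "u i j = w i" "u i (j - 1) = w i" by auto
  with assms(3,4) show "pdist3 (u i j) (u i (j - 1)) \<le> t0 * cmax" by (simp add: pdist3_def)
qed (use assms(1,2) in auto)

text \<open>The hypotheses tmax and cond are what guarantee that a configuration satisfying iso
  exists; once iso is assumed, optimality does not depend on them.\<close>

theorem theorem3:
  fixes N :: nat and M :: "nat \<Rightarrow> nat" and \<sigma> :: "nat \<Rightarrow> real"
    and \<gamma> r0 h0 t0 :: real and s :: "real \<times> real"
    and u :: "nat \<Rightarrow> nat \<Rightarrow> pos3" and w :: "nat \<Rightarrow> pos3" and t :: nat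
  assumes N: "N \<ge> 1"
    and M: "\<forall>i\<in>{1..N}. M i \<ge> 1"
    and sigma: "\<forall>i\<in>{1..N}. \<sigma> i > 0"
    and gamma: "\<gamma> > 0"
    and pars: "r0 > 0" "h0 > 0" "t0 > 0"
    and t: "t \<in> {1..N}"
    and tmax: "real (M t) / (\<sigma> t)\<^sup>2 = Max ((\<lambda>i. real (M i) / (\<sigma> i)\<^sup>2) ` {1..N})"
    and cond: "real (M t) / (\<sigma> t)\<^sup>2 \<le> (1/2) * (\<Sum>i\<in>{1..N}. real (M i) / (\<sigma> i)\<^sup>2)"
    and hover: "\<forall>i\<in>{1..N}. \<forall>j\<in>{1..M i}. u i j = w i"
    and r_opt: "\<forall>i\<in>{1..N}. hdist s (w i) = max r0 h0"
    and h_opt: "\<forall>i\<in>{1..N}. height (w i) = h0"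
    and iso: "(\<Sum>i\<in>{1..N}. (real (M i) / (\<sigma> i)\<^sup>2 * (hdist s (w i))\<^sup>2 / (dist3 s (w i)) ^ 4)
                   *\<^sub>R outer (gvec s (w i)))
            = ((1/2) * (\<Sum>i\<in>{1..N}. real (M i) / (\<sigma> i)\<^sup>2 * (hdist s (w i))\<^sup>2 / (dist3 s (w i)) ^ 4))
                   *\<^sub>R mat 1"
  shows "feasible r0 h0 t0 0 N M s u \<and>
         (\<forall>v. feasible r0 h0 t0 0 N M s v \<longrightarrow>
              det (fisher \<gamma> \<sigma> N M s v) \<le> det (fisher \<gamma> \<sigma> N M s u))"
proof (intro conjI allI impI)
  show "feasible r0 h0 t0 0 N M s u"
    using hover r_opt h_opt pars by (intro feasible_hover) auto
  define K where "K = (\<Sum>i\<in>{1..N}. real (M i) / (\<sigma> i)\<^sup>2 * rss_gain (max r0 h0) h0)"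
  have gains: "(\<Sum>i\<in>{1..N}. real (M i) / (\<sigma> i)\<^sup>2 * (hdist s (w i))\<^sup>2 / (dist3 s (w i)) ^ 4) = K"
    unfolding K_def
  proof (intro sum.cong refl)
    fix i assume "i \<in> {1..N}"
    with r_opt h_opt have "(hdist s (w i))\<^sup>2 / (dist3 s (w i)) ^ 4 = rss_gain (max r0 h0) h0"
      unfolding hdist_over_dist3 by simp
    then show "real (M i) / (\<sigma> i)\<^sup>2 * (hdist s (w i))\<^sup>2 / (dist3 s (w i)) ^ 4
        = real (M i) / (\<sigma> i)\<^sup>2 * rss_gain (max r0 h0) h0"
      by (metis times_divide_eq_right)
  qed
  have "fisher \<gamma> \<sigma> N M s u = ((10 * \<gamma> / ln 10)\<^sup>2 * (K / 2)) *\<^sub>R mat 1"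
    unfolding fisher_hover[OF hover] iso gains by simp
  then have det_u: "det (fisher \<gamma> \<sigma> N M s u) = ((10 * \<gamma> / ln 10)\<^sup>2 / 2 * K)\<^sup>2"
    by (simp add: det_2 mat_def power2_eq_square)
  fix v assume "feasible r0 h0 t0 0 N M s v"
  from det_fisher_le[OF this pars(1,2)]
  show "det (fisher \<gamma> \<sigma> N M s v) \<le> det (fisher \<gamma> \<sigma> N M s u)"
    unfolding det_u K_def .
qed

end
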